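(* Let $\Gamma$ be a graph of order $n$, minimum degree $\delta>0$ and maximum degree $\Delta\ge 2$. For every integer $j\in\{2-\Delta,\dots,0\}$ and every integer $k\le-\frac{j\delta}{\Delta}$, we have $\gamma_k^o(\Gamma)+\gamma_j^o(\Gamma)\le n$.
   Context: Graphs are finite and simple. For $S\subseteq V$ and $v\in V$, $\delta_S(v)$ is the number of neighbours of $v$ in $S$, $\overline{S}=V\setminus S$, and $\partial(S)$ the set of vertices of $\overline{S}$ with a neighbour in $S$. A nonempty $S$ is an offensive $k$-alliance if $\delta_S(v)\ge\delta_{\overline{S}}(v)+k$ for all $v\in\partial(S)$, and a global offensive $k$-alliance if moreover it is dominating. $\gamma_k^o(\Gamma)$ denotes the minimum cardinality of a global offensive $k$-alliance in $\Gamma$. *)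

theory Defs
  imports Complex_Main
begin

definition simple_graph :: "'a set \<Rightarrow> ('a \<Rightarrow> 'a \<Rightarrow> bool) \<Rightarrow> bool" where
  "simple_graph V E \<longleftrightarrow> finite V \<and> (\<forall>u v. E u v \<longrightarrow> E v u)
     \<and> (\<forall>v. \<not> E v v) \<and> (\<forall>u v. E u v \<longrightarrow> u \<in> V \<and> v \<in> V)"

definition deg :: "'a set \<Rightarrow> ('a \<Rightarrow> 'a \<Rightarrow> bool) \<Rightarrow> 'a \<Rightarrow> nat" where
  "deg V E v = card {u \<in> V. E v u}"

definition min_deg :: "'a set \<Rightarrow> ('a \<Rightarrow> 'a \<Rightarrow> bool) \<Rightarrow> nat" where
  "min_deg V E = Min (deg V E ` V)"

definition max_deg :: "'a set \<Rightarrow> ('a \<Rightarrow> 'a \<Rightarrow> bool) \<Rightarrow> nat" where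
  "max_deg V E = Max (deg V E ` V)"

definition delta_in :: "('a \<Rightarrow> 'a \<Rightarrow> bool) \<Rightarrow> 'a set \<Rightarrow> 'a \<Rightarrow> nat" where
  "delta_in E S v = card {u \<in> S. E v u}"

definition boundary :: "'a set \<Rightarrow> ('a \<Rightarrow> 'a \<Rightarrow> bool) \<Rightarrow> 'a set \<Rightarrow> 'a set" where
  "boundary V E S = {v \<in> V - S. \<exists>u \<in> S. E v u}"

definition offensive_alliance :: "'a set \<Rightarrow> ('a \<Rightarrow> 'a \<Rightarrow> bool) \<Rightarrow> int \<Rightarrow> 'a set \<Rightarrow> bool" where
  "offensive_alliance V E k S \<longleftrightarrow> S \<noteq> {} \<and> S \<subseteq> V \<and>
     (\<forall>v \<in> boundary V E S. int (delta_in E S v) \<ge> int (delta_in E (V - S) v) + k)"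

definition dominating :: "'a set \<Rightarrow> ('a \<Rightarrow> 'a \<Rightarrow> bool) \<Rightarrow> 'a set \<Rightarrow> bool" where
  "dominating V E S \<longleftrightarrow> S \<subseteq> V \<and> (\<forall>v \<in> V - S. \<exists>u \<in> S. E v u)"

definition global_offensive_alliance :: "'a set \<Rightarrow> ('a \<Rightarrow> 'a \<Rightarrow> bool) \<Rightarrow> int \<Rightarrow> 'a set \<Rightarrow> bool" where
  "global_offensive_alliance V E k S \<longleftrightarrow> offensive_alliance V E k S \<and> dominating V E S"

text \<open>\<gamma>_k^o: minimum cardinality of a global offensive k-alliance
(V itself always is one when V is nonempty, since its boundary is empty).\<close>
definition gamma_o :: "'a set \<Rightarrow> ('a \<Rightarrow> 'a \<Rightarrow> bool) \<Rightarrow> int \<Rightarrow> nat" where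
  "gamma_o V E k = Min (card ` {S. global_offensive_alliance V E k S})"

end

theory Submission
  imports Defs
begin

text \<open>
  Choose \<open>S \<subseteq> V\<close> maximising the number of edges between \<open>S\<close> and \<open>V - S\<close> plus
  \<open>(j / \<Delta>) \<Sum>v\<in>S. deg v\<close>. Moving one vertex \<open>v\<close> across the cut changes this potential
  by \<open>\<delta>_(V-S)(v) - \<delta>_S(v) \<plusminus> j deg(v) / \<Delta>\<close>, so at a maximiser every \<open>v \<notin> S\<close> satisfies
  \<open>\<delta>_S(v) \<ge> \<delta>_(V-S)(v) + j deg(v) / \<Delta> \<ge> \<delta>_(V-S)(v) + j\<close>, and every \<open>v \<in> S\<close> satisfies
  \<open>\<delta>_(V-S)(v) \<ge> \<delta>_S(v) - j deg(v) / \<Delta> \<ge> \<delta>_S(v) - j \<delta> / \<Delta> \<ge> \<delta>_S(v) + k\<close>.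
  Since \<open>j > -\<Delta>\<close> and \<open>\<delta> > 0\<close>, the same inequalities give every vertex a neighbour across
  the cut. Hence \<open>S\<close> is a global offensive \<open>j\<close>-alliance and \<open>V - S\<close> a global offensive
  \<open>k\<close>-alliance, whose sizes add up to \<open>n\<close>.
\<close>

lemma delta_in_eq_sum_of_bool:
  assumes "finite A"
  shows "real (delta_in E A v) = (\<Sum>w\<in>A. of_bool (E v w))"
  using assms by (simp add: delta_in_def Collect_conj_eq Int_commute)

lemma delta_in_insert_self:
  assumes "\<not> E v v"
  shows "delta_in E (insert v A) v = delta_in E A v"
  using assms unfolding delta_in_def by (metis (no_types, lifting) insert_iff)

lemma delta_in_Diff_self:
  assumes "\<not> E v v"
  shows "delta_in E (A - {v}) v = delta_in E A v"
  using assms unfolding delta_in_def by (metis (no_types, lifting) Diff_iff singletonD)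

lemma deg_eq_delta_in_add:
  assumes "finite V" "S \<subseteq> V"
  shows "deg V E v = delta_in E S v + delta_in E (V - S) v"
proof -
  have "{u \<in> V. E v u} = {u \<in> S. E v u} \<union> {u \<in> V - S. E v u}" using assms(2) by blast
  moreover have "finite {u \<in> V. E v u}" using assms(1) by simp
  ultimately show ?thesis
    unfolding deg_def delta_in_def by (simp add: card_Un_disjoint disjoint_iff)
qed

definition cut_weight :: "'a set \<Rightarrow> ('a \<Rightarrow> 'a \<Rightarrow> bool) \<Rightarrow> 'a set \<Rightarrow> real" where
  "cut_weight V E S = (\<Sum>u\<in>S. real (delta_in E (V - S) u))"

lemma cut_weight_insert:
  assumes "simple_graph V E" "S \<subseteq> V" "v \<in> V - S"
  shows "cut_weight V E (insert v S)
           = cut_weight V E S - real (delta_in E S v) + real (delta_in E (V - S) v)"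
proof -
  have fin: "finite V" and sym: "\<And>u w. E u w \<Longrightarrow> E w u" and irr: "\<not> E v v"
    using assms(1) unfolding simple_graph_def by blast+
  have fS: "finite S" using fin assms(2) finite_subset by blast
  have V_minus_insert: "V - insert v S = (V - S) - {v}" by blast
  have drop_v: "real (delta_in E ((V - S) - {v}) u) = real (delta_in E (V - S) u) - of_bool (E u v)"
    for u
  proof -
    have "real (delta_in E ((V - S) - {v}) u) = (\<Sum>w\<in>(V - S) - {v}. of_bool (E u w))"
      using fin by (simp only: delta_in_eq_sum_of_bool finite_Diff)
    also have "\<dots> = (\<Sum>w\<in>V - S. of_bool (E u w)) - of_bool (E u v)"
      using fin assms(3) by (simp only: sum_diff1 finite_Diff if_True)
    finally show ?thesis using fin by (simp only: delta_in_eq_sum_of_bool finite_Diff)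
  qed
  have split: "cut_weight V E (insert v S)
      = real (delta_in E (V - S) v) + (\<Sum>u\<in>S. real (delta_in E (V - S) u) - of_bool (E u v))"
    unfolding cut_weight_def V_minus_insert using fS assms(3)
    by (simp add: delta_in_Diff_self irr drop_v)
  have "(\<Sum>u\<in>S. of_bool (E u v)) = (\<Sum>u\<in>S. of_bool (E v u) :: real)"
    by (rule sum.cong) (auto dest: sym)
  also have "\<dots> = real (delta_in E S v)"
    using fS by (simp only: delta_in_eq_sum_of_bool)
  finally show ?thesis using split unfolding cut_weight_def by (simp add: sum_subtractf)
qed

lemma exists_locally_optimal_partition:
  fixes c :: "'a \<Rightarrow> real"
  assumes "simple_graph V E"
  obtains S where "S \<subseteq> V"
    and "\<And>v. v \<in> V - S \<Longrightarrow> real (delta_in E (V - S) v) + c v \<le> real (delta_in E S v)"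
    and "\<And>v. v \<in> S \<Longrightarrow> real (delta_in E S v) \<le> real (delta_in E (V - S) v) + c v"
proof -
  have fin: "finite V" and irr: "\<And>v. \<not> E v v"
    using assms unfolding simple_graph_def by blast+
  define P where "P S = cut_weight V E S + sum c S" for S
  have P_insert: "P (insert v T) = P T - real (delta_in E T v) + real (delta_in E (V - T) v) + c v"
    if "T \<subseteq> V" "v \<in> V - T" for T v
  proof -
    have "finite T" using that(1) fin by (rule finite_subset)
    then show ?thesis
      using cut_weight_insert[OF assms that] that(2) unfolding P_def by simp
  qed
  define P_max where "P_max = Max (P ` Pow V)"
  have "P_max \<in> P ` Pow V" unfolding P_max_def using fin by (intro Max_in) auto
  then obtain S where S: "S \<subseteq> V" and "P S = P_max" by auto
  have S_max: "P T \<le> P S" if "T \<subseteq> V" for T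
    unfolding \<open>P S = P_max\<close> P_max_def using fin that by (intro Max_ge) auto
  show ?thesis
  proof
    show "S \<subseteq> V" by (fact S)
  next
    fix v assume v: "v \<in> V - S"
    show "real (delta_in E (V - S) v) + c v \<le> real (delta_in E S v)"
      using P_insert[OF S v] S_max[of "insert v S"] S v by simp
  next
    fix v assume v: "v \<in> S"
    have "S - {v} \<subseteq> V" "v \<in> V - (S - {v})" using v S by auto
    then have "P (insert v (S - {v})) = P (S - {v}) - real (delta_in E (S - {v}) v)
                 + real (delta_in E (V - (S - {v})) v) + c v"
      by (rule P_insert)
    moreover have "insert v (S - {v}) = S" "V - (S - {v}) = insert v (V - S)" using v S by auto
    ultimately have "P S = P (S - {v}) - real (delta_in E S v) + real (delta_in E (V - S) v) + c v"
      by (simp add: delta_in_Diff_self[of E v, OF irr] delta_in_insert_self[of E v, OF irr])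
    then show "real (delta_in E S v) \<le> real (delta_in E (V - S) v) + c v"
      using S_max[of "S - {v}"] S by auto
  qed
qed

lemma deg_between_min_max:
  assumes "finite V" "v \<in> V"
  shows "min_deg V E \<le> deg V E v" "deg V E v \<le> max_deg V E"
  using assms by (simp_all add: min_deg_def max_deg_def)

lemma outside_vertex_bounds:
  fixes a b d D :: nat and j :: int
  assumes "d = a + b" "0 < d" "d \<le> D" "j \<le> 0" "0 < int D + j"
    and "real b + of_int j * real d / real D \<le> real a"
  shows "int b + j \<le> int a" "1 \<le> a"
proof -
  have D: "0 < real D" using assms(2,3) by simp
  have "of_int j * real D \<le> of_int j * real d"
    using assms(3,4) by (simp add: mult_left_mono_neg)
  then have "of_int j \<le> of_int j * real d / real D"
    using D by (simp add: le_divide_eq)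
  then show "int b + j \<le> int a" using assms(6) by linarith
  show "1 \<le> a"
  proof (rule ccontr)
    assume "\<not> 1 \<le> a"
    then have "real d + of_int j * real d / real D \<le> 0" using assms(1,6) by simp
    then have "real d * (real D + of_int j) \<le> 0" using D by (simp add: field_simps)
    moreover have "0 < real d * (real D + of_int j)" using assms(2,5) by simp
    ultimately show False by linarith
  qed
qed

lemma inside_vertex_bounds:
  fixes a b d m D :: nat and j k :: int
  assumes "d = a + b" "m \<le> d" "0 < m" "j \<le> 0" "0 < D"
    and "real a \<le> real b + of_int j * real d / real D"
    and "of_int k \<le> - (of_int j * real m) / real D"
  shows "int a + k \<le> int b" "1 \<le> b"
proof -
  have "of_int j * real d \<le> of_int j * real m"
    using assms(2,4) by (simp add: mult_left_mono_neg)
  then have jd: "of_int j * real d / real D \<le> of_int j * real m / real D"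
    using assms(5) by (simp add: divide_right_mono)
  then show "int a + k \<le> int b" using assms(6,7) by linarith
  show "1 \<le> b"
  proof (rule ccontr)
    assume "\<not> 1 \<le> b"
    moreover have "of_int j * real m / real D \<le> 0"
      using assms(4) by (simp add: divide_nonpos_nonneg mult_nonpos_nonneg)
    ultimately have "a = 0" using assms(6) jd by simp
    with \<open>\<not> 1 \<le> b\<close> show False using assms(1-3) by simp
  qed
qed

lemma global_offensive_allianceI:
  assumes "V \<noteq> {}" "S \<subseteq> V"
    and "\<And>v. v \<in> V - S \<Longrightarrow> 1 \<le> delta_in E S v"
    and "\<And>v. v \<in> V - S \<Longrightarrow> int (delta_in E (V - S) v) + k \<le> int (delta_in E S v)"
  shows "global_offensive_alliance V E k S"
proof -
  have nbr: "\<exists>u\<in>S. E v u" if "v \<in> V - S" for v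
  proof -
    have "{u \<in> S. E v u} \<noteq> {}"
      using assms(3)[OF that] unfolding delta_in_def by (metis card.empty not_one_le_zero)
    then show ?thesis by blast
  qed
  have "S \<noteq> {}" using assms(1) nbr by blast
  with assms nbr show ?thesis
    unfolding global_offensive_alliance_def offensive_alliance_def dominating_def boundary_def
    by auto
qed

lemma gamma_o_le_card:
  assumes "finite V" "global_offensive_alliance V E k S"
  shows "gamma_o V E k \<le> card S"
proof -
  have "{S. global_offensive_alliance V E k S} \<subseteq> Pow V"
    by (auto simp: global_offensive_alliance_def offensive_alliance_def)
  then have "finite {S. global_offensive_alliance V E k S}"
    using assms(1) finite_subset by blast
  then show ?thesis unfolding gamma_o_def using assms(2) by (intro Min_le) auto
qed

lemma global_offensive_alliance_from_cut_bound:
  assumes "finite V" "V \<noteq> {}" "S \<subseteq> V" "0 < min_deg V E" "2 - int (max_deg V E) \<le> j" "j \<le> 0"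
    and "\<And>v. v \<in> V - S \<Longrightarrow> real (delta_in E (V - S) v)
           + of_int j * real (deg V E v) / real (max_deg V E) \<le> real (delta_in E S v)"
  shows "global_offensive_alliance V E j S"
proof (rule global_offensive_allianceI[OF assms(2,3)])
  fix v assume v: "v \<in> V - S"
  then have "v \<in> V" by simp
  note deg_bounds = deg_between_min_max[where E = E, OF assms(1) this]
  have "0 < deg V E v" using assms(4) deg_bounds(1) by simp
  then show "1 \<le> delta_in E S v" "int (delta_in E (V - S) v) + j \<le> int (delta_in E S v)"
    using outside_vertex_bounds[OF deg_eq_delta_in_add[OF assms(1,3)] _ deg_bounds(2) assms(6) _
        assms(7)[OF v]] assms(5,6)
    by simp_all
qed

lemma complement_global_offensive_alliance_from_cut_bound:
  assumes "finite V" "V \<noteq> {}" "S \<subseteq> V" "0 < min_deg V E" "0 < max_deg V E" "j \<le> 0"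
    and "of_int k \<le> - (of_int j * real (min_deg V E)) / real (max_deg V E)"
    and "\<And>v. v \<in> S \<Longrightarrow> real (delta_in E S v)
           \<le> real (delta_in E (V - S) v) + of_int j * real (deg V E v) / real (max_deg V E)"
  shows "global_offensive_alliance V E k (V - S)"
proof (rule global_offensive_allianceI[OF assms(2) Diff_subset])
  fix v assume "v \<in> V - (V - S)"
  then have v: "v \<in> S" "v \<in> V" using assms(3) by auto
  show "1 \<le> delta_in E (V - S) v"
    "int (delta_in E (V - (V - S)) v) + k \<le> int (delta_in E (V - S) v)"
    using inside_vertex_bounds[OF deg_eq_delta_in_add[OF assms(1,3)]
        deg_between_min_max(1)[where E = E, OF assms(1) v(2)] assms(4,6,5) assms(8)[OF v(1)] assms(7)]
      assms(3) by (auto simp: double_diff)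
qed

theorem mainTheorem6:
  fixes V :: "'a set" and E :: "'a \<Rightarrow> 'a \<Rightarrow> bool" and j k :: int
  assumes "simple_graph V E"
    and "V \<noteq> {}"
    and "min_deg V E > 0"
    and "max_deg V E \<ge> 2"
    and "2 - int (max_deg V E) \<le> j" and "j \<le> 0"
    and "real_of_int k \<le> - (real_of_int j * real (min_deg V E)) / real (max_deg V E)"
  shows "gamma_o V E k + gamma_o V E j \<le> card V"
proof -
  have fin: "finite V" using assms(1) by (simp add: simple_graph_def)
  obtain S where S: "S \<subseteq> V"
    and outside: "\<And>v. v \<in> V - S \<Longrightarrow> real (delta_in E (V - S) v)
                 + of_int j * real (deg V E v) / real (max_deg V E) \<le> real (delta_in E S v)"
    and inside: "\<And>v. v \<in> S \<Longrightarrow> real (delta_in E S v)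
                 \<le> real (delta_in E (V - S) v) + of_int j * real (deg V E v) / real (max_deg V E)"
    using exists_locally_optimal_partition[OF assms(1),
        where c = "\<lambda>v. of_int j * real (deg V E v) / real (max_deg V E)"] by blast
  have "gamma_o V E j \<le> card S"
    using global_offensive_alliance_from_cut_bound[OF fin assms(2) S assms(3,5,6) outside]
    by (rule gamma_o_le_card[OF fin])
  moreover have "gamma_o V E k \<le> card (V - S)"
    using complement_global_offensive_alliance_from_cut_bound[OF fin assms(2) S assms(3) _ assms(6,7)
        inside] assms(4)
    by (intro gamma_o_le_card[OF fin]) simp
  moreover have "card S + card (V - S) = card V"
    using fin S by (metis card_Diff_subset card_mono finite_subset le_add_diff_inverse)
  ultimately show ?thesis by linarith
qed

end
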